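(* Let $\Omega$ be a set, $q$ a set of operations on $\Omega$, and $\Pi$ a set of similarities on $\Omega$ that is a monoid with involution. Then: (1) if $\approx_\Pi\in\Pi$, then $\approx_\Pi$ equals $\sim_{\mathrm{Inv}(\Pi)}$; (2) $\sim_q$ equals $\approx_{\mathrm{Sim}(q)}$.
   Context: A similarity on $\Omega$ is a relation $\pi\subseteq\Omega\times\Omega$ such that every $a$ has some $b$ with $a\pi b$ and every $b$ has some $a$ with $a\pi b$; $\bar a\,\pi\,\bar b$ means coordinatewise relatedness; for relations $R,S\subseteq\Omega^k$, $R\,\pi\,S$ means $\bar a\pi\bar b$ implies ($\bar a\in R\iff\bar b\in S$). A monoid with involution is a set of similarities closed under composition and converses. A set of operations is a set of finitary relations and quantifiers (subsets of $\mathcal P(\Omega^{k_1})\times\cdots\times\mathcal P(\Omega^{k_l})$) on $\Omega$; $\mathscr L^-_{\infty\infty}(q)$ is the equality-free infinitary logic with predicate and Lindström quantifier symbols for members of $q$. $a\sim_q b$ iff for all formulas $\phi(x,\bar y)$ of $\mathscr L^-_{\infty\infty}(q)$ and tuples $\bar c$ from $\Omega$, $\phi(a,\bar c)\iff\phi(b,\bar c)$. $a\approx_\Pi b$ iff for every finite $k$ and $\bar c\in\Omega^k$ some $\pi\in\Pi$ has $(a,\bar c)\,\pi\,(b,\bar c)$. A relation $R$ is invariant under a similarity or equivalence relation $\rho$ if $\bar a\rho\bar b$ implies $\bar a\in R\iff\bar b\in R$; a quantifier $Q$ is $\sim$-invariant under $\pi$ if for all $\bar R,\bar S$ of its type with each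 component invariant under $\sim$ and $R_i\,\pi\,S_i$: $\bar R\in Q\iff\bar S\in Q$. $\mathrm{Inv}(\Pi)$: all relations invariant under every $\pi\in\Pi$ and all quantifiers $\approx_\Pi$-invariant under every $\pi\in\Pi$. $\mathrm{Sim}(q)$: all similarities $\pi$ under which every relation of $q$ is invariant and every quantifier of $q$ is $\sim_q$-invariant. *)

theory Defs
  imports Main
begin

text \<open>The underlying set \<Omega> is the universe of the type 'a. Elements of \<Omega>^k are
  lists of length k. Similarities are relations given as sets of pairs.\<close>

definition tuples :: "nat \<Rightarrow> 'a list set" where
  "tuples k = {xs. length xs = k}"

definition similarity :: "('a \<times> 'a) set \<Rightarrow> bool" where
  "similarity \<pi> \<longleftrightarrow> (\<forall>a. \<exists>b. (a, b) \<in> \<pi>) \<and> (\<forall>b. \<exists>a. (a, b) \<in> \<pi>)"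

definition rel_tuple :: "('a \<times> 'a) set \<Rightarrow> 'a list \<Rightarrow> 'a list \<Rightarrow> bool" where
  "rel_tuple \<pi> as bs \<longleftrightarrow> list_all2 (\<lambda>x y. (x, y) \<in> \<pi>) as bs"

definition rel_sim :: "('a \<times> 'a) set \<Rightarrow> nat \<Rightarrow> 'a list set \<Rightarrow> 'a list set \<Rightarrow> bool" where
  "rel_sim \<pi> k R S \<longleftrightarrow>
     (\<forall>as bs. length as = k \<longrightarrow> rel_tuple \<pi> as bs \<longrightarrow> (as \<in> R \<longleftrightarrow> bs \<in> S))"

definition monoid_with_involution :: "('a \<times> 'a) set set \<Rightarrow> bool" where
  "monoid_with_involution \<Pi> \<longleftrightarrow>
     (\<forall>\<pi>\<in>\<Pi>. similarity \<pi>) \<and> (\<forall>\<pi>\<in>\<Pi>. \<forall>\<rho>\<in>\<Pi>. \<pi> O \<rho> \<in> \<Pi>) \<and> (\<forall>\<pi>\<in>\<Pi>. \<pi>\<inverse> \<in> \<Pi>)"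

text \<open>Operations: a k-ary relation, or a Lindstroem quantifier of type (k_1,...,k_l),
  i.e. a set of l-tuples (R_1,...,R_l) with R_i a subset of \<Omega>^(k_i).\<close>
datatype 'a operation = Rel nat "'a list set" | Quant "nat list" "'a list set list set"

definition qtype :: "nat list \<Rightarrow> 'a list set list set" where
  "qtype ks = {Rs. length Rs = length ks \<and> (\<forall>i<length ks. Rs ! i \<subseteq> tuples (ks ! i))}"

fun wf_op :: "'a operation \<Rightarrow> bool" where
  "wf_op (Rel k R) \<longleftrightarrow> R \<subseteq> tuples k"
| "wf_op (Quant ks Q) \<longleftrightarrow> Q \<subseteq> qtype ks"

definition operations :: "'a operation set \<Rightarrow> bool" where
  "operations q \<longleftrightarrow> (\<forall>op\<in>q. wf_op op)"

definition inv_rel :: "('a \<times> 'a) set \<Rightarrow> nat \<Rightarrow> 'a list set \<Rightarrow> bool" where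
  "inv_rel \<rho> k R \<longleftrightarrow>
     (\<forall>as bs. length as = k \<longrightarrow> rel_tuple \<rho> as bs \<longrightarrow> (as \<in> R \<longleftrightarrow> bs \<in> R))"

definition quant_inv :: "('a \<times> 'a) set \<Rightarrow> ('a \<times> 'a) set \<Rightarrow> nat list \<Rightarrow> 'a list set list set \<Rightarrow> bool" where
  "quant_inv E \<pi> ks Q \<longleftrightarrow>
     (\<forall>Rs Ss. Rs \<in> qtype ks \<longrightarrow> Ss \<in> qtype ks \<longrightarrow>
        (\<forall>i<length ks. inv_rel E (ks ! i) (Rs ! i) \<and> inv_rel E (ks ! i) (Ss ! i)
                       \<and> rel_sim \<pi> (ks ! i) (Rs ! i) (Ss ! i)) \<longrightarrow>
        (Rs \<in> Q \<longleftrightarrow> Ss \<in> Q))"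

text \<open>Semantics of L^-_{\<infinity>\<infinity>}(q): variables range over the type 'v; a formula is
  identified with its extension, a set of assignments 'v \<Rightarrow> 'a.\<close>

definition upd :: "('v \<Rightarrow> 'a) \<Rightarrow> 'v list \<Rightarrow> 'a list \<Rightarrow> ('v \<Rightarrow> 'a)" where
  "upd s xs as = (\<lambda>v. case map_of (zip xs as) v of Some a \<Rightarrow> a | None \<Rightarrow> s v)"

inductive_set definable :: "'a operation set \<Rightarrow> ('v \<Rightarrow> 'a) set set"
  for q :: "'a operation set" where
  atom: "Rel k R \<in> q \<Longrightarrow> length vs = k \<Longrightarrow> {s. map s vs \<in> R} \<in> definable q"
| neg: "X \<in> definable q \<Longrightarrow> - X \<in> definable q"
| conj: "(\<forall>X\<in>F. X \<in> definable q) \<Longrightarrow> \<Inter>F \<in> definable q"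
| ex: "X \<in> definable q \<Longrightarrow>
         {s. \<exists>t\<in>X. \<forall>v. v \<notin> W \<longrightarrow> t v = s v} \<in> definable q"
| quant: "Quant ks Q \<in> q \<Longrightarrow> length xss = length ks \<Longrightarrow> length Xs = length ks \<Longrightarrow>
         (\<forall>i<length ks. length (xss ! i) = ks ! i \<and> distinct (xss ! i) \<and> Xs ! i \<in> definable q) \<Longrightarrow>
         {s. map (\<lambda>i. {as. length as = ks ! i \<and> upd s (xss ! i) as \<in> Xs ! i}) [0..<length ks] \<in> Q}
           \<in> definable q"

text \<open>X has its free variables among V.\<close>
definition depends_only :: "('v \<Rightarrow> 'a) set \<Rightarrow> 'v set \<Rightarrow> bool" where
  "depends_only X V \<longleftrightarrow> (\<forall>s t. (\<forall>v\<in>V. s v = t v) \<longrightarrow> (s \<in> X \<longleftrightarrow> t \<in> X))"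

definition indisc :: "'v itself \<Rightarrow> 'a operation set \<Rightarrow> ('a \<times> 'a) set" where
  "indisc (_ :: 'v itself) q = {(a, b).
     \<forall>(X :: ('v \<Rightarrow> 'a) set) \<in> definable q. \<forall>x ys.
       distinct (x # ys) \<and> depends_only X (set (x # ys)) \<longrightarrow>
       (\<forall>cs s. length cs = length ys \<longrightarrow>
          (upd s (x # ys) (a # cs) \<in> X \<longleftrightarrow> upd s (x # ys) (b # cs) \<in> X))}"

definition approx :: "('a \<times> 'a) set set \<Rightarrow> ('a \<times> 'a) set" where
  "approx \<Pi> = {(a, b). \<forall>cs. \<exists>\<pi>\<in>\<Pi>. rel_tuple \<pi> (a # cs) (b # cs)}"

definition Inv :: "('a \<times> 'a) set set \<Rightarrow> 'a operation set" where
  "Inv \<Pi> =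
     {Rel k R | k R. R \<subseteq> tuples k \<and> (\<forall>\<pi>\<in>\<Pi>. inv_rel \<pi> k R)}
   \<union> {Quant ks Q | ks Q. Q \<subseteq> qtype ks \<and> (\<forall>\<pi>\<in>\<Pi>. quant_inv (approx \<Pi>) \<pi> ks Q)}"

definition Sim :: "'v itself \<Rightarrow> 'a operation set \<Rightarrow> ('a \<times> 'a) set set" where
  "Sim V q = {\<pi>. similarity \<pi>
     \<and> (\<forall>k R. Rel k R \<in> q \<longrightarrow> inv_rel \<pi> k R)
     \<and> (\<forall>ks Q. Quant ks Q \<in> q \<longrightarrow> quant_inv (indisc V q) \<pi> ks Q)}"

end

(*
  Definable sets of assignments are invariant under every similarity of a family P that
  preserves the relations of q and, relative to a reflexive member E of P, its quantifiers.
  This is an induction on definability; existential quantification goes through because a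
  similarity is total in both directions. For such P, approx P is contained in indisc q.

  (2) indisc q is a reflexive member of Sim q: it preserves a relation of q by changing one
  argument at a time, and it preserves every quantifier because a reflexive similarity
  relates only equal relations.
  (1) The orbit of a tuple under Pi is a relation of Inv Pi, so indisc (Inv Pi) preserves
  it, which gives indisc (Inv Pi) <= approx Pi; and approx Pi is reflexive because Pi
  contains pi O pi^-1.
*)
theory Submission
  imports Defs
begin

lemma upd_Nil1 [simp]: "upd s [] as = s"
  by (simp add: upd_def)

lemma upd_Nil2 [simp]: "upd s xs [] = s"
  by (simp add: upd_def)

lemma upd_Cons [simp]: "upd s (x # xs) (a # as) = (upd s xs as)(x := a)"
  by (auto simp: upd_def fun_eq_iff)

lemma upd_notin:
  assumes "v \<notin> set xs"
  shows "upd s xs as v = s v"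
proof -
  have "map_of (zip xs as) v = None"
    using assms by (auto simp: map_of_eq_None_iff dest: set_zip_leftD)
  then show ?thesis
    by (simp add: upd_def)
qed

lemma upd_in: "v \<in> set xs \<Longrightarrow> length as = length xs \<Longrightarrow> upd s xs as v = upd t xs as v"
  by (auto simp: upd_def split: option.split dest: map_of_zip_is_None[THEN iffD2])

lemma map_upd_distinct: "distinct xs \<Longrightarrow> length as = length xs \<Longrightarrow> map (upd s xs as) xs = as"
  by (induction xs arbitrary: as) (auto simp: length_Suc_conv intro: map_cong)

lemma upd_map_self: "upd s xs (map s xs) = s"
  by (induction xs) auto

lemma depends_only_upd:
  "depends_only X (set xs) \<Longrightarrow> length as = length xs \<Longrightarrow> upd s xs as \<in> X \<longleftrightarrow> upd t xs as \<in> X"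
  unfolding depends_only_def by (metis upd_in)

lemma depends_only_map: "depends_only {s. map s vs \<in> R} (set vs)"
  by (simp add: depends_only_def cong: map_cong)

lemma infinite_obtain_distinct_list:
  assumes "infinite (UNIV :: 'v set)"
  obtains vs :: "'v list" where "distinct vs" and "length vs = n"
proof -
  obtain F :: "'v set" where "finite F" and "card F = n"
    using infinite_arbitrarily_large[OF assms] by blast
  moreover obtain vs where "set vs = F" and "distinct vs"
    using \<open>finite F\<close> finite_distinct_list by blast
  ultimately show ?thesis
    using that distinct_card by fastforce
qed

lemma rel_tuple_length: "rel_tuple \<pi> xs ys \<Longrightarrow> length ys = length xs"
  by (simp add: rel_tuple_def list_all2_lengthD)

lemma rel_tuple_refl: "refl \<pi> \<Longrightarrow> rel_tuple \<pi> xs xs"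
  by (simp add: rel_tuple_def list_all2_refl reflD)

lemma rel_tuple_converse: "rel_tuple \<pi> xs ys \<Longrightarrow> rel_tuple (\<pi>\<inverse>) ys xs"
  by (auto simp: rel_tuple_def list_all2_conv_all_nth)

lemma rel_tuple_relcomp: "rel_tuple \<rho> xs ys \<Longrightarrow> rel_tuple \<pi> ys zs \<Longrightarrow> rel_tuple (\<rho> O \<pi>) xs zs"
  unfolding rel_tuple_def by (rule list_all2_trans[of _ _ "\<lambda>x z. (x, z) \<in> \<rho> O \<pi>"]) auto

lemma inv_rel_iff_rel_sim: "inv_rel \<pi> k R \<longleftrightarrow> rel_sim \<pi> k R R"
  by (simp add: inv_rel_def rel_sim_def)

lemma rel_sim_refl_eq:
  assumes "refl \<pi>" and "R \<subseteq> tuples k" and "S \<subseteq> tuples k" and "rel_sim \<pi> k R S"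
  shows "R = S"
proof -
  have "as \<in> R \<longleftrightarrow> as \<in> S" if "length as = k" for as
    using assms(4) rel_tuple_refl[OF assms(1)] that unfolding rel_sim_def by blast
  then show ?thesis
    using assms(2,3) unfolding tuples_def by blast
qed

lemma quant_inv_refl:
  assumes "refl E"
  shows "quant_inv E E ks Q"
  unfolding quant_inv_def
proof (intro allI impI)
  fix Rs Ss
  assume Rs: "Rs \<in> qtype ks" and Ss: "Ss \<in> qtype ks"
    and sim: "\<forall>i<length ks. inv_rel E (ks ! i) (Rs ! i) \<and> inv_rel E (ks ! i) (Ss ! i)
                \<and> rel_sim E (ks ! i) (Rs ! i) (Ss ! i)"
  have "Rs ! i = Ss ! i" if "i < length ks" for i
    using that Rs Ss sim by (intro rel_sim_refl_eq[OF assms]) (auto simp: qtype_def)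
  then have "Rs = Ss"
    using Rs Ss by (intro nth_equalityI) (simp_all add: qtype_def)
  then show "Rs \<in> Q \<longleftrightarrow> Ss \<in> Q"
    by simp
qed

lemma refl_imp_similarity: "refl \<pi> \<Longrightarrow> similarity \<pi>"
  by (auto simp: similarity_def dest: reflD)

lemma similarity_converse: "similarity \<pi> \<Longrightarrow> similarity (\<pi>\<inverse>)"
  by (auto simp: similarity_def)

lemma similarity_refl_relcomp_converse: "similarity \<pi> \<Longrightarrow> refl (\<pi> O \<pi>\<inverse>)"
  by (auto simp: similarity_def intro!: reflI)

definition rel_assign :: "('a \<times> 'a) set \<Rightarrow> ('v \<Rightarrow> 'a) \<Rightarrow> ('v \<Rightarrow> 'a) \<Rightarrow> bool" where
  "rel_assign \<pi> s t \<longleftrightarrow> (\<forall>v. (s v, t v) \<in> \<pi>)"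

definition assign_invariant :: "('a \<times> 'a) set \<Rightarrow> ('v \<Rightarrow> 'a) set \<Rightarrow> bool" where
  "assign_invariant \<pi> X \<longleftrightarrow> (\<forall>s t. rel_assign \<pi> s t \<longrightarrow> (s \<in> X \<longleftrightarrow> t \<in> X))"

lemma rel_assign_refl: "refl \<pi> \<Longrightarrow> rel_assign \<pi> s s"
  by (simp add: rel_assign_def reflD)

lemma rel_assign_converse: "rel_assign \<pi> s t \<Longrightarrow> rel_assign (\<pi>\<inverse>) t s"
  by (simp add: rel_assign_def)

lemma similarity_ex_rel_assign:
  assumes "similarity \<pi>"
  obtains t where "rel_assign \<pi> s t"
proof
  show "rel_assign \<pi> s (\<lambda>v. SOME b. (s v, b) \<in> \<pi>)"
    using assms unfolding rel_assign_def similarity_def by (auto intro: someI_ex)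
qed

lemma rel_assign_upd:
  "rel_tuple \<pi> as bs \<Longrightarrow> rel_assign \<pi> s t \<Longrightarrow> rel_assign \<pi> (upd s xs as) (upd t xs bs)"
proof (induction xs arbitrary: as bs)
  case (Cons x xs)
  then show ?case
    by (cases as) (auto simp: rel_tuple_def rel_assign_def list_all2_Cons1)
qed simp

lemma assign_invariant_converse: "assign_invariant \<pi> X \<Longrightarrow> assign_invariant (\<pi>\<inverse>) X"
  by (auto simp: assign_invariant_def rel_assign_def)

definition cylindrify :: "'v set \<Rightarrow> ('v \<Rightarrow> 'a) set \<Rightarrow> ('v \<Rightarrow> 'a) set" where
  "cylindrify W X = {s. \<exists>t\<in>X. \<forall>v. v \<notin> W \<longrightarrow> t v = s v}"

lemma cylindrify_rel_assign:
  assumes "similarity \<pi>" and "assign_invariant \<pi> X" and "rel_assign \<pi> s t"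
    and "s \<in> cylindrify W X"
  shows "t \<in> cylindrify W X"
proof -
  obtain s' where "s' \<in> X" and s': "\<forall>v. v \<notin> W \<longrightarrow> s' v = s v"
    using assms(4) by (auto simp: cylindrify_def)
  obtain u where u: "rel_assign \<pi> s' u"
    using assms(1) by (rule similarity_ex_rel_assign)
  define t' where "t' v = (if v \<in> W then u v else t v)" for v
  have "rel_assign \<pi> s' t'"
    using u s' assms(3) by (simp add: rel_assign_def t'_def)
  then have "t' \<in> X"
    using assms(2) \<open>s' \<in> X\<close> by (simp add: assign_invariant_def)
  moreover have "\<forall>v. v \<notin> W \<longrightarrow> t' v = t v"
    by (simp add: t'_def)
  ultimately show ?thesis
    unfolding cylindrify_def by blast
qed

lemma assign_invariant_cylindrify:
  assumes "similarity \<pi>" and "assign_invariant \<pi> X"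
  shows "assign_invariant \<pi> (cylindrify W X)"
  using cylindrify_rel_assign[OF assms]
    cylindrify_rel_assign[OF similarity_converse[OF assms(1)] assign_invariant_converse[OF assms(2)]]
  unfolding assign_invariant_def by (blast dest: rel_assign_converse)

definition defined_rel :: "nat \<Rightarrow> 'v list \<Rightarrow> ('v \<Rightarrow> 'a) set \<Rightarrow> ('v \<Rightarrow> 'a) \<Rightarrow> 'a list set" where
  "defined_rel k xs X s = {as. length as = k \<and> upd s xs as \<in> X}"

lemma rel_sim_defined_rel:
  assumes "assign_invariant \<pi> X" and "rel_assign \<pi> s t"
  shows "rel_sim \<pi> k (defined_rel k xs X s) (defined_rel k xs X t)"
  unfolding rel_sim_def
proof (intro allI impI)
  fix as bs assume "length as = k" and ab: "rel_tuple \<pi> as bs"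
  moreover have "rel_assign \<pi> (upd s xs as) (upd t xs bs)"
    using ab assms(2) by (rule rel_assign_upd)
  ultimately show "as \<in> defined_rel k xs X s \<longleftrightarrow> bs \<in> defined_rel k xs X t"
    using assms(1) by (simp add: defined_rel_def assign_invariant_def rel_tuple_length)
qed

lemma definable_assign_invariant:
  fixes X :: "('v \<Rightarrow> 'a) set"
  assumes sim: "\<forall>\<pi>\<in>P. similarity \<pi>" and "E \<in> P" and "refl E"
    and rels: "\<And>\<pi> k R. \<pi> \<in> P \<Longrightarrow> Rel k R \<in> q \<Longrightarrow> inv_rel \<pi> k R"
    and quants: "\<And>\<pi> ks Q. \<pi> \<in> P \<Longrightarrow> Quant ks Q \<in> q \<Longrightarrow> quant_inv E \<pi> ks Q"
    and "X \<in> definable q" and "\<pi> \<in> P"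
  shows "assign_invariant \<pi> X"
  using \<open>X \<in> definable q\<close> \<open>\<pi> \<in> P\<close>
proof (induction arbitrary: \<pi> rule: definable.induct)
  case (atom k R vs)
  have "rel_tuple \<pi> (map s vs) (map t vs)" if "rel_assign \<pi> s t" for s t :: "'v \<Rightarrow> 'a"
    using that by (simp add: rel_tuple_def rel_assign_def list_all2_conv_all_nth)
  then show ?case
    using rels[OF atom.prems atom.hyps(1)] atom.hyps(2)
    by (auto simp: assign_invariant_def inv_rel_def)
next
  case (neg X)
  then show ?case
    by (simp add: assign_invariant_def)
next
  case (conj F)
  then show ?case
    by (simp add: assign_invariant_def)
next
  case (ex X W)
  then show ?case
    using sim assign_invariant_cylindrify[of \<pi> X W] by (simp add: cylindrify_def)
next
  case (quant ks Q xss Xs)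
  define Rs where "Rs u = map (\<lambda>i. defined_rel (ks ! i) (xss ! i) (Xs ! i) u) [0..<length ks]"
    for u :: "'v \<Rightarrow> 'a"
  have "Rs s \<in> Q \<longleftrightarrow> Rs t \<in> Q" if st: "rel_assign \<pi> s t" for s t
  proof -
    have IH: "assign_invariant \<rho> (Xs ! i)" if "\<rho> \<in> P" "i < length ks" for \<rho> i
      using quant.IH that by blast
    have sections: "rel_sim \<rho> (ks ! i) (Rs u ! i) (Rs u' ! i)"
      if "\<rho> \<in> P" "rel_assign \<rho> u u'" "i < length ks" for \<rho> u u' i
      using rel_sim_defined_rel[OF IH] that by (simp add: Rs_def)
    have "Rs u \<in> qtype ks" for u
      by (auto simp: Rs_def qtype_def tuples_def defined_rel_def)
    moreover have "inv_rel E (ks ! i) (Rs u ! i)" if "i < length ks" for i u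
      using sections[OF \<open>E \<in> P\<close> rel_assign_refl[OF \<open>refl E\<close>] that] by (simp add: inv_rel_iff_rel_sim)
    ultimately show ?thesis
      using quants[OF quant.prems quant.hyps(1)] sections[OF quant.prems st]
      by (simp add: quant_inv_def)
  qed
  then show ?case
    by (simp add: assign_invariant_def Rs_def defined_rel_def)
qed

lemma approx_subset_indisc:
  fixes V :: "'v itself"
  assumes sim: "\<forall>\<pi>\<in>P. similarity \<pi>"
    and inv: "\<And>\<pi> X. \<pi> \<in> P \<Longrightarrow> X \<in> (definable q :: ('v \<Rightarrow> 'a) set set) \<Longrightarrow> assign_invariant \<pi> X"
  shows "approx P \<subseteq> indisc V q"
proof clarify
  fix a b assume ab: "(a, b) \<in> approx P"
  have "upd s (x # ys) (a # cs) \<in> X \<longleftrightarrow> upd s (x # ys) (b # cs) \<in> X"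
    if X: "X \<in> definable q" and dep: "depends_only X (set (x # ys))" and len: "length cs = length ys"
    for X :: "('v \<Rightarrow> 'a) set" and x ys cs s
  proof -
    obtain \<pi> where \<pi>: "\<pi> \<in> P" "rel_tuple \<pi> (a # cs) (b # cs)"
      using ab by (auto simp: approx_def)
    obtain t where "rel_assign \<pi> s t"
      using sim \<pi>(1) similarity_ex_rel_assign by blast
    then have "rel_assign \<pi> (upd s (x # ys) (a # cs)) (upd t (x # ys) (b # cs))"
      using \<pi>(2) by (rule rel_assign_upd[rotated])
    then have "upd s (x # ys) (a # cs) \<in> X \<longleftrightarrow> upd t (x # ys) (b # cs) \<in> X"
      using inv[OF \<pi>(1) X] by (simp add: assign_invariant_def)
    also have "\<dots> \<longleftrightarrow> upd s (x # ys) (b # cs) \<in> X"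
      using depends_only_upd[OF dep] len by (simp del: upd_Cons)
    finally show ?thesis .
  qed
  then show "(a, b) \<in> indisc V q"
    by (simp add: indisc_def)
qed

lemma refl_subset_approx: "\<rho> \<in> P \<Longrightarrow> refl \<rho> \<Longrightarrow> \<rho> \<subseteq> approx P"
  by (auto simp: approx_def rel_tuple_def intro!: list_all2_refl dest: reflD)

lemma refl_indisc: "refl (indisc V q)"
  by (rule reflI) (simp add: indisc_def)

lemma indiscD:
  fixes V :: "'v itself" and X :: "('v \<Rightarrow> 'a) set"
  assumes "(a, b) \<in> indisc V q" and "X \<in> definable q"
    and "distinct (x # ys)" and "depends_only X (set (x # ys))" and "length cs = length ys"
  shows "upd s (x # ys) (a # cs) \<in> X \<longleftrightarrow> upd s (x # ys) (b # cs) \<in> X"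
  using assms unfolding indisc_def by (auto simp del: upd_Cons)

lemma indisc_fun_upd:
  fixes V :: "'v itself" and X :: "('v \<Rightarrow> 'a) set"
  assumes "(a, b) \<in> indisc V q" and "X \<in> definable q" and "finite F" and "depends_only X F"
  shows "s(x := a) \<in> X \<longleftrightarrow> s(x := b) \<in> X"
proof -
  obtain ys where ys: "set ys = F - {x}" and "distinct ys"
    using \<open>finite F\<close> by (meson finite_Diff finite_distinct_list)
  then have "distinct (x # ys)"
    by simp
  moreover have "depends_only X (set (x # ys))"
    using assms(4) ys by (auto simp: depends_only_def)
  ultimately have "upd s (x # ys) (a # map s ys) \<in> X \<longleftrightarrow> upd s (x # ys) (b # map s ys) \<in> X"
    using assms(1,2) by (intro indiscD) simp_all
  then show ?thesis
    by (simp add: upd_map_self)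
qed

lemma finite_change_invariant:
  assumes single: "\<And>s x a b. (a, b) \<in> E \<Longrightarrow> s(x := a) \<in> X \<longleftrightarrow> s(x := b) \<in> X"
    and "finite D" and "\<forall>v. v \<notin> D \<longrightarrow> s v = t v" and "\<forall>v\<in>D. (s v, t v) \<in> E"
  shows "s \<in> X \<longleftrightarrow> t \<in> X"
  using assms(2-4)
proof (induction D arbitrary: s rule: finite_induct)
  case empty
  then have "s = t"
    by (simp add: fun_eq_iff)
  then show ?case
    by simp
next
  case (insert x D)
  have "s(x := t x) \<in> X \<longleftrightarrow> t \<in> X"
    using insert by (intro insert.IH) auto
  moreover have "s(x := s x) \<in> X \<longleftrightarrow> s(x := t x) \<in> X"
    using insert.prems(2) by (intro single) simp
  ultimately show ?case
    by simp
qed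

lemma inv_rel_indisc:
  fixes V :: "'v itself"
  assumes "infinite (UNIV :: 'v set)" and "Rel k R \<in> q"
  shows "inv_rel (indisc V q) k R"
  unfolding inv_rel_def
proof (intro allI impI)
  fix as bs assume as: "length as = k" and ab: "rel_tuple (indisc V q) as bs"
  obtain vs :: "'v list" where vs: "distinct vs" "length vs = k"
    using assms(1) by (rule infinite_obtain_distinct_list)
  define X :: "('v \<Rightarrow> 'a) set" where "X = {s. map s vs \<in> R}"
  have X: "X \<in> definable q"
    unfolding X_def using assms(2) vs(2) by (rule definable.atom)
  have single: "s(x := a) \<in> X \<longleftrightarrow> s(x := b) \<in> X" if "(a, b) \<in> indisc V q" for s x a b
    using that X finite_set depends_only_map unfolding X_def by (rule indisc_fun_upd)
  fix r :: "'v \<Rightarrow> 'a"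
  have "rel_assign (indisc V q) (upd r vs as) (upd r vs bs)"
    using ab rel_assign_refl[OF refl_indisc] by (rule rel_assign_upd)
  moreover have "\<forall>v. v \<notin> set vs \<longrightarrow> upd r vs as v = upd r vs bs v"
    by (simp add: upd_notin)
  ultimately have "upd r vs as \<in> X \<longleftrightarrow> upd r vs bs \<in> X"
    using finite_change_invariant[of "indisc V q" X, OF single finite_set]
    by (simp add: rel_assign_def)
  moreover have "length bs = k"
    using ab as by (simp add: rel_tuple_length)
  ultimately show "as \<in> R \<longleftrightarrow> bs \<in> R"
    using vs as by (simp add: X_def map_upd_distinct)
qed

lemma indisc_in_Sim:
  fixes V :: "'v itself"
  assumes "infinite (UNIV :: 'v set)"
  shows "indisc V q \<in> Sim V q"
  unfolding Sim_def
  by (intro CollectI conjI allI impI refl_imp_similarity refl_indisc quant_inv_refl inv_rel_indisc[OF assms])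

lemma indisc_eq_approx_Sim:
  fixes V :: "'v itself"
  assumes "infinite (UNIV :: 'v set)"
  shows "indisc V q = approx (Sim V q)"
proof
  show "indisc V q \<subseteq> approx (Sim V q)"
    using indisc_in_Sim[OF assms] refl_indisc by (rule refl_subset_approx)
  have "assign_invariant \<pi> X" if "\<pi> \<in> Sim V q" and "X \<in> definable q" for \<pi> and X :: "('v \<Rightarrow> 'a) set"
    using that
    by (intro definable_assign_invariant[OF _ indisc_in_Sim[OF assms] refl_indisc]) (auto simp: Sim_def)
  then show "approx (Sim V q) \<subseteq> indisc V q"
    by (intro approx_subset_indisc) (auto simp: Sim_def)
qed

lemma monoid_with_involution_refl_member:
  assumes "monoid_with_involution \<Pi>" and "\<pi> \<in> \<Pi>"
  shows "\<pi> O \<pi>\<inverse> \<in> \<Pi>" and "refl (\<pi> O \<pi>\<inverse>)"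
  using assms similarity_refl_relcomp_converse by (auto simp: monoid_with_involution_def)

definition orbit :: "('a \<times> 'a) set set \<Rightarrow> 'a list \<Rightarrow> 'a list set" where
  "orbit \<Pi> xs = {ys. \<exists>\<pi>\<in>\<Pi>. rel_tuple \<pi> xs ys}"

lemma inv_rel_orbit:
  assumes "monoid_with_involution \<Pi>" and "\<pi> \<in> \<Pi>"
  shows "inv_rel \<pi> k (orbit \<Pi> xs)"
  unfolding inv_rel_def
proof (intro allI impI)
  fix ds es assume de: "rel_tuple \<pi> ds es"
  have "\<rho> O \<pi> \<in> \<Pi>" and "\<rho> O \<pi>\<inverse> \<in> \<Pi>" if "\<rho> \<in> \<Pi>" for \<rho>
    using assms that by (auto simp: monoid_with_involution_def)
  then show "ds \<in> orbit \<Pi> xs \<longleftrightarrow> es \<in> orbit \<Pi> xs"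
    using rel_tuple_relcomp[OF _ de] rel_tuple_relcomp[OF _ rel_tuple_converse[OF de]]
    unfolding orbit_def by blast
qed

lemma Rel_orbit_in_Inv:
  assumes "monoid_with_involution \<Pi>"
  shows "Rel (length xs) (orbit \<Pi> xs) \<in> Inv \<Pi>"
proof -
  have "orbit \<Pi> xs \<subseteq> tuples (length xs)"
    by (auto simp: orbit_def tuples_def rel_tuple_length)
  then show ?thesis
    using inv_rel_orbit[OF assms] by (simp add: Inv_def)
qed

lemma indisc_Inv_subset_approx:
  fixes V :: "'v itself"
  assumes "infinite (UNIV :: 'v set)" and "monoid_with_involution \<Pi>" and "\<rho> \<in> \<Pi>" and "refl \<rho>"
  shows "indisc V (Inv \<Pi>) \<subseteq> approx \<Pi>"
proof clarify
  fix a b assume ab: "(a, b) \<in> indisc V (Inv \<Pi>)"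
  have "b # cs \<in> orbit \<Pi> (a # cs)" for cs
  proof -
    obtain vs :: "'v list" where "distinct vs" and "length vs = Suc (length cs)"
      using assms(1) by (rule infinite_obtain_distinct_list)
    then obtain x ys where vs: "vs = x # ys" and "length cs = length ys"
      by (cases vs) auto
    define X :: "('v \<Rightarrow> 'a) set" where "X = {s. map s vs \<in> orbit \<Pi> (a # cs)}"
    have "X \<in> definable (Inv \<Pi>)"
      unfolding X_def using Rel_orbit_in_Inv[OF assms(2)] by (rule definable.atom) (simp add: \<open>length vs = _\<close>)
    fix r :: "'v \<Rightarrow> 'a"
    have "upd r vs (a # cs) \<in> X \<longleftrightarrow> upd r vs (b # cs) \<in> X"
      using ab \<open>X \<in> _\<close> \<open>distinct vs\<close> depends_only_map \<open>length cs = length ys\<close> unfolding vs X_def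
      by (rule indiscD)
    moreover have "a # cs \<in> orbit \<Pi> (a # cs)"
      using assms(3,4) rel_tuple_refl unfolding orbit_def by blast
    ultimately show ?thesis
      using \<open>distinct vs\<close> \<open>length vs = _\<close> by (simp add: X_def map_upd_distinct del: upd_Cons)
  qed
  then show "(a, b) \<in> approx \<Pi>"
    by (simp add: approx_def orbit_def)
qed

lemma approx_subset_indisc_Inv:
  assumes "monoid_with_involution \<Pi>" and "approx \<Pi> \<in> \<Pi>" and "refl (approx \<Pi>)"
  shows "approx \<Pi> \<subseteq> indisc V (Inv \<Pi>)"
  using assms(1)
  by (intro approx_subset_indisc definable_assign_invariant[OF _ assms(2,3)])
    (auto simp: Inv_def monoid_with_involution_def)

lemma approx_eq_indisc_Inv:
  fixes V :: "'v itself"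
  assumes "infinite (UNIV :: 'v set)" and "monoid_with_involution \<Pi>" and "approx \<Pi> \<in> \<Pi>"
  shows "approx \<Pi> = indisc V (Inv \<Pi>)"
proof -
  obtain \<rho> where "\<rho> \<in> \<Pi>" and "refl \<rho>"
    using monoid_with_involution_refl_member[OF assms(2,3)] by blast
  then have "refl (approx \<Pi>)"
    using refl_subset_approx by (metis reflD reflI subsetD)
  show ?thesis
    using approx_subset_indisc_Inv[OF assms(2,3) \<open>refl (approx \<Pi>)\<close>]
      indisc_Inv_subset_approx[OF assms(1,2) \<open>\<rho> \<in> \<Pi>\<close> \<open>refl \<rho>\<close>]
    by (rule equalityI)
qed

theorem proposition15:
  fixes V :: "'v itself" and q :: "'a operation set" and \<Pi> :: "('a \<times> 'a) set set"
  assumes "infinite (UNIV :: 'v set)"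
    and "operations q"
    and "monoid_with_involution \<Pi>"
  shows "(approx \<Pi> \<in> \<Pi> \<longrightarrow> approx \<Pi> = indisc V (Inv \<Pi>))
         \<and> indisc V q = approx (Sim V q)"
  using approx_eq_indisc_Inv[OF assms(1,3)] indisc_eq_approx_Sim[OF assms(1)] by blast

end
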